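(* Let $\mathcal S=\{s_1,\dots,s_k\}\subseteq\Sigma^n$. Let $s^*_H$ be the lexicographically minimal string among all strings $t\in\Sigma^n$ minimizing $\sum_{j}\partial_{Ham}(s_j,t)$, and let $s^*_{SH}$ be the lexicographically minimal string among all strings $t\in\Sigma^n$ minimizing $\sum_j\partial_{SH}(s_j,t)$. Then for every $i\in[1..n]$ with $s^*_{SH}[i]\ne s^*_H[i]$, we have $SW(\mathcal S,s^*_{SH},i-1)\ne\emptyset$ or $SW(\mathcal S,s^*_{SH},i)\ne\emptyset$.
   Context: The swap at position $p$ exchanges the letters at $p,p+1$; a swap permutation is a set of swaps at positions pairwise differing by at least $2$; equal-length strings are matching if a swap permutation transforms one into the other. Swap distance $\partial_S(u,v)$: $+\infty$ if not matching, else the number of swaps in the unique swap permutation from $u$ to $v$ never swapping identical letters. Swap+Hamming distance $\partial_{SH}(u,v)=\min_t\big(\partial_S(u,v')\ldots\big)$, precisely $\partial_{SH}(u,v)=\min_{t}\big(\partial_S(u,t)+\partial_{Ham}(t,v)\big)$. Greedy swaps: for strings $t,s$ of equal length, scanning $i=1,2,\dots$ left to right, a swap is counted at position $i$ iff $t[i]\ne t[i+1]$, $t[i]=s[i+1]$, $t[i+1]=s[i]$, and no swap was counted at position $i-1$ (this greedy procedure realizes $\partial_{SH}$). For a string $t$ and position $i$, $SW(\mathcal S,t,i)$ is the set of indices $j\in[1..k]$ such that the greedy procedure applied to $(t,s_j)$ counts a swap at position $i$ (with $SW(\mathcal S,t,0)=\emptyset$). *)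

theory Defs
  imports Main "HOL-Library.Extended_Nat"
begin

(* Strings are lists; positions in the paper are 1-based: u[p] = u ! (p - 1).
   A swap at (1-based) position p exchanges u[p] and u[p+1]. *)

definition swap_perm :: "nat \<Rightarrow> nat set \<Rightarrow> bool" where
  "swap_perm n P \<longleftrightarrow> P \<subseteq> {1..<n} \<and>
     (\<forall>p\<in>P. \<forall>q\<in>P. p \<noteq> q \<longrightarrow> p + 2 \<le> q \<or> q + 2 \<le> p)"

definition apply_swaps :: "nat set \<Rightarrow> 'a list \<Rightarrow> 'a list" where
  "apply_swaps P u = map (\<lambda>i. if i \<in> P then u ! i
                               else if i - 1 \<in> P \<and> i \<ge> 2 then u ! (i - 2)
                               else u ! (i - 1)) [1..<Suc (length u)]"

definition matching :: "'a list \<Rightarrow> 'a list \<Rightarrow> bool" where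
  "matching u v \<longleftrightarrow> length u = length v \<and>
     (\<exists>P. swap_perm (length u) P \<and> apply_swaps P u = v)"

definition swap_dist :: "'a list \<Rightarrow> 'a list \<Rightarrow> enat" where
  "swap_dist u v = (if matching u v then
     enat (card (THE P. swap_perm (length u) P \<and> apply_swaps P u = v \<and>
                        (\<forall>p\<in>P. u ! (p - 1) \<noteq> u ! p)))
     else \<infinity>)"

definition ham_dist :: "'a list \<Rightarrow> 'a list \<Rightarrow> nat" where
  "ham_dist u v = card {i. i < length u \<and> u ! i \<noteq> v ! i}"

definition sh_dist :: "'a list \<Rightarrow> 'a list \<Rightarrow> enat" where
  "sh_dist u v = (INF t \<in> {t. length t = length u}. swap_dist u t + enat (ham_dist t v))"

fun greedy_at :: "'a list \<Rightarrow> 'a list \<Rightarrow> nat \<Rightarrow> bool" where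
  "greedy_at t s 0 = False"
| "greedy_at t s (Suc i) =
     (Suc i < length t \<and> t ! i \<noteq> t ! Suc i \<and> t ! i = s ! Suc i \<and>
      t ! Suc i = s ! i \<and> \<not> greedy_at t s i)"

definition SW :: "'a list list \<Rightarrow> 'a list \<Rightarrow> nat \<Rightarrow> nat set" where
  "SW S t i = {j \<in> {1..length S}. greedy_at t (S ! (j - 1)) i}"

definition strings :: "'a set \<Rightarrow> nat \<Rightarrow> 'a list set" where
  "strings Sig n = {t. set t \<subseteq> Sig \<and> length t = n}"

definition lex_less :: "'a::linorder list \<Rightarrow> 'a list \<Rightarrow> bool" where
  "lex_less x y \<longleftrightarrow> (x, y) \<in> lexord {(a, b). a < b}"

definition is_lex_min :: "'a::linorder list set \<Rightarrow> 'a list \<Rightarrow> bool" where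
  "is_lex_min A x \<longleftrightarrow> x \<in> A \<and> (\<forall>y\<in>A. y \<noteq> x \<longrightarrow> lex_less x y)"

definition minimizers :: "('b \<Rightarrow> 'c::linorder) \<Rightarrow> 'b set \<Rightarrow> 'b set" where
  "minimizers f A = {t \<in> A. \<forall>t'\<in>A. f t \<le> f t'}"

end

theory Submission
  imports Defs
begin

text \<open>
  Counted greedily, the swaps between a candidate centre t and a string s are simultaneously
  as many as possible and never swap equal letters, so the Swap+Hamming distance is
  \<open>Ham(s,t) - #greedy swaps\<close>. If no greedy swap touches position i, then changing t[i] alone
  changes every summand \<open>\<partial>\<^sub>S\<^sub>H(s\<^sub>j,t)\<close> by at most as much as it changes \<open>\<partial>\<^sub>H\<^sub>a\<^sub>m(s\<^sub>j,t)\<close>. Exchanging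
  the i-th letters of the two optimal centres therefore keeps both optimal, and lexicographic
  minimality of each forces both letters to be smaller than the other.
\<close>

lemma swap_perm_range: "swap_perm n P \<Longrightarrow> p \<in> P \<Longrightarrow> 1 \<le> p \<and> p < n"
  unfolding swap_perm_def by auto

lemma swap_perm_Suc_notin: "swap_perm n P \<Longrightarrow> p \<in> P \<Longrightarrow> Suc p \<notin> P"
  unfolding swap_perm_def by fastforce

lemma swap_perm_finite: "swap_perm n P \<Longrightarrow> finite P"
  unfolding swap_perm_def using finite_subset by blast

lemma swap_perm_subset: "swap_perm n P \<Longrightarrow> Q \<subseteq> P \<Longrightarrow> swap_perm n Q"
  unfolding swap_perm_def by blast

lemma length_apply_swaps [simp]: "length (apply_swaps P u) = length u"
  by (simp add: apply_swaps_def del: upt_Suc)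

lemma nth_apply_swaps: "k < length u \<Longrightarrow> apply_swaps P u ! k =
  (if Suc k \<in> P then u ! Suc k else if k \<in> P \<and> k \<ge> 1 then u ! (k - 1) else u ! k)"
  by (simp add: apply_swaps_def del: upt_Suc)

lemma apply_swaps_empty [simp]: "apply_swaps {} u = u"
  by (rule nth_equalityI) (auto simp: nth_apply_swaps)

lemma apply_swaps_insert:
  assumes sp: "swap_perm (length u) (insert p Q)" and "p \<notin> Q"
  shows "apply_swaps (insert p Q) u = (apply_swaps Q u)[p - 1 := u ! p, p := u ! (p - 1)]"
    and "apply_swaps Q u ! (p - 1) = u ! (p - 1)" and "apply_swaps Q u ! p = u ! p"
proof -
  have p: "1 \<le> p" "p < length u" using swap_perm_range[OF sp] by auto
  have Suc_p: "Suc p \<notin> insert p Q" using swap_perm_Suc_notin[OF sp] by blast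
  have pred_p: "p - 1 \<notin> Q"
    using p swap_perm_Suc_notin[OF sp, of "p - 1"] swap_perm_range[OF sp, of "p - 1"]
    by (cases "p = 1") auto
  show "apply_swaps Q u ! (p - 1) = u ! (p - 1)" "apply_swaps Q u ! p = u ! p"
    using p Suc_p pred_p \<open>p \<notin> Q\<close> by (auto simp: nth_apply_swaps)
  show "apply_swaps (insert p Q) u = (apply_swaps Q u)[p - 1 := u ! p, p := u ! (p - 1)]"
  proof (rule nth_equalityI)
    fix k assume "k < length (apply_swaps (insert p Q) u)"
    then show "apply_swaps (insert p Q) u ! k = (apply_swaps Q u)[p - 1 := u ! p, p := u ! (p - 1)] ! k"
      using p Suc_p pred_p \<open>p \<notin> Q\<close> by (cases "k = p"; cases "k = p - 1") (auto simp: nth_apply_swaps)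
  qed simp
qed

text \<open>At the leftmost position p where two swap permutations differ, position p - 1 receives
  u ! p from one of them and u ! (p - 1) from the other.\<close>

lemma apply_swaps_neq_first_difference:
  assumes spP: "swap_perm (length u) P" and spQ: "swap_perm (length u) Q"
    and P: "\<forall>p\<in>P. u ! (p - 1) \<noteq> u ! p"
    and p: "p \<in> P" "p \<notin> Q" and below: "\<forall>q<p. q \<in> P \<longleftrightarrow> q \<in> Q"
  shows "apply_swaps P u \<noteq> apply_swaps Q u"
proof -
  have r: "1 \<le> p" "p < length u" using swap_perm_range[OF spP p(1)] by auto
  have "p - 1 \<notin> Q"
    using below swap_perm_Suc_notin[OF spP, of "p - 1"] swap_perm_range[OF spQ, of "p - 1"] p r
    by force
  then have "apply_swaps Q u ! (p - 1) = u ! (p - 1)" using r p by (simp add: nth_apply_swaps)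
  moreover have "apply_swaps P u ! (p - 1) = u ! p" using r p by (simp add: nth_apply_swaps)
  ultimately show ?thesis using P p by auto
qed

lemma apply_swaps_inj:
  assumes spP: "swap_perm (length u) P" and spQ: "swap_perm (length u) Q"
    and eq: "apply_swaps P u = apply_swaps Q u"
    and P: "\<forall>p\<in>P. u ! (p - 1) \<noteq> u ! p" and Q: "\<forall>p\<in>Q. u ! (p - 1) \<noteq> u ! p"
  shows "P = Q"
proof (rule ccontr)
  assume "P \<noteq> Q"
  define D where "D = (P - Q) \<union> (Q - P)"
  have "finite D" using swap_perm_finite[OF spP] swap_perm_finite[OF spQ] by (simp add: D_def)
  moreover have "D \<noteq> {}" using \<open>P \<noteq> Q\<close> by (auto simp: D_def)
  ultimately have p: "Min D \<in> D" by simp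
  have below: "\<forall>q < Min D. q \<in> P \<longleftrightarrow> q \<in> Q"
    using Min_le[OF \<open>finite D\<close>] by (force simp: D_def)
  show False
  proof (cases "Min D \<in> P")
    case True
    then show False
      using apply_swaps_neq_first_difference[OF spP spQ P] p below eq by (auto simp: D_def)
  next
    case False
    then show False
      using apply_swaps_neq_first_difference[OF spQ spP Q] p below eq by (auto simp: D_def)
  qed
qed

lemma swap_dist_apply_swaps:
  assumes sp: "swap_perm (length u) P" and P: "\<forall>p\<in>P. u ! (p - 1) \<noteq> u ! p"
  shows "swap_dist u (apply_swaps P u) = enat (card P)"
proof -
  have "matching u (apply_swaps P u)" unfolding matching_def using sp by auto
  moreover have "(THE Q. swap_perm (length u) Q \<and> apply_swaps Q u = apply_swaps P u \<and>
                        (\<forall>p\<in>Q. u ! (p - 1) \<noteq> u ! p)) = P"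
    using apply_swaps_inj[OF _ sp _ _ P] sp P by (intro the_equality) auto
  ultimately show ?thesis by (simp add: swap_dist_def)
qed

lemma swap_dist_matching:
  assumes "matching u w"
  obtains P where "swap_perm (length u) P" "apply_swaps P u = w" "swap_dist u w = enat (card P)"
proof -
  obtain P where P: "swap_perm (length u) P" "apply_swaps P u = w"
    using assms matching_def by blast
  define P' where "P' = {p\<in>P. u ! (p - 1) \<noteq> u ! p}"
  have sp': "swap_perm (length u) P'" using swap_perm_subset[OF P(1)] P'_def by auto
  have "apply_swaps P' u = apply_swaps P u"
    using swap_perm_Suc_notin[OF P(1)] by (auto intro!: nth_equalityI simp: nth_apply_swaps P'_def)
  then show ?thesis
    using that[OF sp'] swap_dist_apply_swaps[OF sp'] P(2) by (simp add: P'_def)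
qed

lemma ham_dist_eq_sum: "ham_dist u v = (\<Sum>k<length u. of_bool (u ! k \<noteq> v ! k))"
  unfolding ham_dist_def by (simp add: Int_def lessThan_def conj_commute)

lemma ham_dist_commute: "length u = length v \<Longrightarrow> ham_dist u v = ham_dist v u"
  unfolding ham_dist_def by (metis)

lemma ham_dist_update:
  assumes "k < length u"
  shows "ham_dist (u[k := d]) v + of_bool (u ! k \<noteq> v ! k) = ham_dist u v + of_bool (d \<noteq> v ! k)"
proof -
  have split: "(\<Sum>i<length u. f i) = f k + (\<Sum>i\<in>{..<length u} - {k}. f i)" for f :: "nat \<Rightarrow> nat"
    using assms by (simp add: sum.remove)
  have "(\<Sum>i\<in>{..<length u} - {k}. of_bool (u[k := d] ! i \<noteq> v ! i)) =
        (\<Sum>i\<in>{..<length u} - {k}. of_bool (u ! i \<noteq> v ! i) :: nat)"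
    by (rule sum.cong) auto
  then show ?thesis
    unfolding ham_dist_eq_sum length_list_update split[of "\<lambda>i. of_bool (u[k := d] ! i \<noteq> v ! i)"]
      split[of "\<lambda>i. of_bool (u ! i \<noteq> v ! i)"]
    using assms by simp
qed

lemma ham_dist_update_right:
  assumes "k < length v" and "length u = length v"
  shows "ham_dist u (v[k := d]) + of_bool (u ! k \<noteq> v ! k) = ham_dist u v + of_bool (u ! k \<noteq> d)"
  using ham_dist_update[of k v d u] ham_dist_commute[of u v] ham_dist_commute[of u "v[k := d]"] assms
  by (simp add: eq_commute)

lemma ham_dist_apply_swaps_insert:
  assumes sp: "swap_perm (length s) (insert p Q)" and "p \<notin> Q"
  shows "ham_dist (apply_swaps (insert p Q) s) x
           + of_bool (s ! (p - 1) \<noteq> x ! (p - 1)) + of_bool (s ! p \<noteq> x ! p)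
         = ham_dist (apply_swaps Q s) x
           + of_bool (s ! p \<noteq> x ! (p - 1)) + of_bool (s ! (p - 1) \<noteq> x ! p)"
proof -
  have p: "1 \<le> p" "p < length s" using swap_perm_range[OF sp] by auto
  define u where "u = apply_swaps Q s"
  have u: "u ! (p - 1) = s ! (p - 1)" "u ! p = s ! p" "length u = length s"
    using apply_swaps_insert(2,3)[OF sp \<open>p \<notin> Q\<close>] by (simp_all add: u_def)
  have "ham_dist (u[p - 1 := s ! p, p := s ! (p - 1)]) x + of_bool (u ! p \<noteq> x ! p)
        = ham_dist (u[p - 1 := s ! p]) x + of_bool (s ! (p - 1) \<noteq> x ! p)"
    using ham_dist_update[of p "u[p - 1 := s ! p]"] p u by simp
  moreover have "ham_dist (u[p - 1 := s ! p]) x + of_bool (u ! (p - 1) \<noteq> x ! (p - 1))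
        = ham_dist u x + of_bool (s ! p \<noteq> x ! (p - 1))"
    using ham_dist_update[of "p - 1" u] p u by simp
  ultimately show ?thesis
    using apply_swaps_insert(1)[OF sp \<open>p \<notin> Q\<close>] u by (simp add: u_def)
qed

subsection \<open>Greedy swaps realize the Swap+Hamming distance\<close>

definition swappable :: "'a list \<Rightarrow> 'a list \<Rightarrow> nat \<Rightarrow> bool" where
  "swappable x s p \<longleftrightarrow> 1 \<le> p \<and> p < length x \<and> x ! (p - 1) \<noteq> x ! p \<and>
     x ! (p - 1) = s ! p \<and> x ! p = s ! (p - 1)"

definition greedy_swaps :: "'a list \<Rightarrow> 'a list \<Rightarrow> nat set" where
  "greedy_swaps x s = {p. greedy_at x s p}"

lemma greedy_at_Suc_iff: "greedy_at x s (Suc i) \<longleftrightarrow> swappable x s (Suc i) \<and> \<not> greedy_at x s i"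
  by (auto simp: swappable_def)

lemma greedy_at_swappable: "greedy_at x s p \<Longrightarrow> swappable x s p"
  by (cases p) (auto simp: swappable_def)

lemma swap_perm_greedy_swaps: "swap_perm (length x) (greedy_swaps x s)"
  unfolding swap_perm_def greedy_swaps_def
proof safe
  fix p assume "greedy_at x s p"
  then show "p \<in> {1..<length x}" using greedy_at_swappable[of x s p] by (auto simp: swappable_def)
next
  fix p q assume pq: "greedy_at x s p" "greedy_at x s q" "p \<noteq> q" "\<not> q + 2 \<le> p"
  show "p + 2 \<le> q"
  proof (rule ccontr)
    assume "\<not> p + 2 \<le> q"
    with pq(3,4) have "q = Suc p \<or> p = Suc q" by linarith
    with pq(1,2) show False using greedy_at_Suc_iff by metis
  qed
qed

lemma greedy_swaps_distinct_letters: "p \<in> greedy_swaps x s \<Longrightarrow> s ! (p - 1) \<noteq> s ! p"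
  unfolding greedy_swaps_def using greedy_at_swappable[of x s p] by (auto simp: swappable_def)

text \<open>Each swap lowers the Hamming distance to x by at most 2, and by 2 only at a swappable
  position.\<close>

lemma ham_dist_le_apply_swaps:
  assumes sp: "swap_perm (length s) P" and Q: "Q \<subseteq> P" and lx: "length x = length s"
  shows "ham_dist s x \<le> card Q + ham_dist (apply_swaps Q s) x + card {q\<in>Q. swappable x s q}"
  using finite_subset[OF Q swap_perm_finite[OF sp]] Q
proof (induction Q rule: finite_induct)
  case (insert p Q)
  have spi: "swap_perm (length s) (insert p Q)" using swap_perm_subset[OF sp insert.prems] .
  have "1 \<le> p \<and> p < length s" using swap_perm_range[OF spi] by blast
  then have "ham_dist (apply_swaps Q s) x
               \<le> ham_dist (apply_swaps (insert p Q) s) x + 1 + of_bool (swappable x s p)"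
    using ham_dist_apply_swaps_insert[OF spi insert.hyps(2), of x] lx
    by (auto simp: swappable_def of_bool_def split: if_splits)
  moreover have "card {q\<in>insert p Q. swappable x s q}
                   = card {q\<in>Q. swappable x s q} + of_bool (swappable x s p)"
  proof -
    have "{q\<in>insert p Q. swappable x s q} = (if swappable x s p
            then insert p {q\<in>Q. swappable x s q} else {q\<in>Q. swappable x s q})" by auto
    then show ?thesis using insert.hyps by simp
  qed
  ultimately show ?case using insert by simp
qed simp

lemma ham_dist_apply_greedy_swaps:
  assumes "Q \<subseteq> greedy_swaps x s" and ls: "length s = length x"
  shows "ham_dist (apply_swaps Q s) x + 2 * card Q = ham_dist s x"
  using finite_subset[OF assms(1) swap_perm_finite[OF swap_perm_greedy_swaps]] assms(1)
proof (induction Q rule: finite_induct)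
  case (insert p Q)
  have spi: "swap_perm (length s) (insert p Q)"
    using swap_perm_subset[OF swap_perm_greedy_swaps insert.prems] ls by simp
  have "swappable x s p" using insert.prems greedy_at_swappable by (auto simp: greedy_swaps_def)
  then have "ham_dist (apply_swaps Q s) x = ham_dist (apply_swaps (insert p Q) s) x + 2"
    using ham_dist_apply_swaps_insert[OF spi insert.hyps(2), of x] by (auto simp: swappable_def)
  then show ?case using insert by simp
qed simp

text \<open>Greedy choice is optimal: every swappable position \<open>\<le> m\<close> of Q either is greedy or its left
  neighbour is, and that neighbour is not in Q.\<close>

lemma card_swappable_le_greedy_upto:
  assumes sp: "swap_perm n Q" and Q: "\<forall>q\<in>Q. swappable x s q"
  shows "card {q\<in>Q. q \<le> m} \<le> card {p\<in>greedy_swaps x s. p \<le> m}"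
proof (induction m rule: less_induct)
  case (less m)
  have fin: "finite {p\<in>greedy_swaps x s. p \<le> k}" for k by simp
  show ?case
  proof (cases m)
    case 0
    then have "{q\<in>Q. q \<le> m} = {}" using Q by (auto simp: swappable_def)
    then show ?thesis by (simp only:) simp
  next
    case (Suc m')
    show ?thesis
    proof (cases "m \<in> Q")
      case False
      then have "{q\<in>Q. q \<le> m} = {q\<in>Q. q \<le> m'}" using Suc by (auto simp: le_Suc_eq)
      moreover have "card {p\<in>greedy_swaps x s. p \<le> m'} \<le> card {p\<in>greedy_swaps x s. p \<le> m}"
        by (rule card_mono[OF fin]) (auto simp: Suc)
      ultimately show ?thesis using less[of m'] Suc by simp
    next
      case True
      have "m' \<notin> Q" using swap_perm_Suc_notin[OF sp, of m'] True Suc by blast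
      show ?thesis
      proof (cases "greedy_at x s m")
        case True
        have "{q\<in>Q. q \<le> m} = insert m {q\<in>Q. q \<le> m'}" using Suc \<open>m \<in> Q\<close> by auto
        moreover have "{p\<in>greedy_swaps x s. p \<le> m} = insert m {p\<in>greedy_swaps x s. p \<le> m'}"
          using Suc True by (auto simp: greedy_swaps_def)
        ultimately show ?thesis using less[of m'] Suc by simp
      next
        case False
        have "greedy_at x s m'" using False Q \<open>m \<in> Q\<close> Suc greedy_at_Suc_iff by metis
        then obtain m'' where m'': "m' = Suc m''" by (cases m') auto
        have "{q\<in>Q. q \<le> m} = insert m {q\<in>Q. q \<le> m''}"
          using Suc m'' \<open>m \<in> Q\<close> \<open>m' \<notin> Q\<close> by (auto simp: le_Suc_eq)
        moreover have "{p\<in>greedy_swaps x s. p \<le> m} = insert m' {p\<in>greedy_swaps x s. p \<le> m''}"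
          using Suc m'' False \<open>greedy_at x s m'\<close> by (auto simp: greedy_swaps_def le_Suc_eq)
        ultimately show ?thesis using less[of m''] Suc m'' by simp
      qed
    qed
  qed
qed

lemma card_swappable_le_greedy:
  assumes "swap_perm n Q" and Q: "\<forall>q\<in>Q. swappable x s q"
  shows "card Q \<le> card (greedy_swaps x s)"
proof -
  have "{q\<in>Q. q \<le> length x} = Q" using Q by (auto simp: swappable_def)
  moreover have "{p\<in>greedy_swaps x s. p \<le> length x} = greedy_swaps x s"
    using swap_perm_range[OF swap_perm_greedy_swaps] by fastforce
  ultimately show ?thesis using card_swappable_le_greedy_upto[OF assms, of "length x"] by simp
qed

definition sh_cost :: "'a list \<Rightarrow> 'a list \<Rightarrow> nat" where
  "sh_cost s x = ham_dist s x - card (greedy_swaps x s)"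

lemma sh_dist_le_apply_swaps:
  assumes "swap_perm (length s) P" and "\<forall>p\<in>P. s ! (p - 1) \<noteq> s ! p"
  shows "sh_dist s y \<le> enat (card P + ham_dist (apply_swaps P s) y)"
proof -
  have "sh_dist s y \<le> swap_dist s (apply_swaps P s) + enat (ham_dist (apply_swaps P s) y)"
    unfolding sh_dist_def by (rule INF_lower) simp
  then show ?thesis using swap_dist_apply_swaps[OF assms] by simp
qed

lemma sh_dist_eq_sh_cost:
  assumes ls: "length s = length x"
  shows "sh_dist s x = enat (sh_cost s x)"
proof (rule antisym)
  have "sh_dist s x \<le> enat (card (greedy_swaps x s) + ham_dist (apply_swaps (greedy_swaps x s) s) x)"
    using swap_perm_greedy_swaps[of x s] ls greedy_swaps_distinct_letters
    by (intro sh_dist_le_apply_swaps) auto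
  also have "\<dots> = enat (sh_cost s x)"
    using ham_dist_apply_greedy_swaps[OF order_refl ls] by (simp add: sh_cost_def)
  finally show "sh_dist s x \<le> enat (sh_cost s x)" .
next
  show "enat (sh_cost s x) \<le> sh_dist s x"
    unfolding sh_dist_def
  proof (rule INF_greatest)
    fix t :: "'a list"
    show "enat (sh_cost s x) \<le> swap_dist s t + enat (ham_dist t x)"
    proof (cases "matching s t")
      case True
      then obtain P where P: "swap_perm (length s) P" "apply_swaps P s = t"
        "swap_dist s t = enat (card P)" by (rule swap_dist_matching)
      have "card {q\<in>P. swappable x s q} \<le> card (greedy_swaps x s)"
        using swap_perm_subset[OF P(1)] by (intro card_swappable_le_greedy[where n = "length s"]) auto
      then show ?thesis
        using ham_dist_le_apply_swaps[OF P(1) order_refl ls[symmetric]] P(2,3)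
        by (simp add: sh_cost_def)
    qed (simp add: swap_dist_def)
  qed
qed

text \<open>Changing x at a position k untouched by the greedy swaps keeps those swaps available, so the
  Swap+Hamming cost changes at most as the Hamming cost at k does.\<close>

lemma sh_cost_update_ungreedy:
  assumes ls: "length s = length x" and k: "k < length x"
    and "\<not> greedy_at x s k" and "\<not> greedy_at x s (Suc k)"
  shows "sh_cost s (x[k := c]) + of_bool (s ! k \<noteq> x ! k) \<le> sh_cost s x + of_bool (s ! k \<noteq> c)"
proof -
  define P where "P = greedy_swaps x s"
  define w where "w = apply_swaps P s"
  have "enat (sh_cost s (x[k := c])) = sh_dist s (x[k := c])"
    using ls by (simp add: sh_dist_eq_sh_cost)
  also have "\<dots> \<le> enat (card P + ham_dist w (x[k := c]))"
    unfolding P_def w_def using swap_perm_greedy_swaps[of x s] ls greedy_swaps_distinct_letters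
    by (intro sh_dist_le_apply_swaps) auto
  finally have cost_le: "sh_cost s (x[k := c]) \<le> card P + ham_dist w (x[k := c])" by simp
  have "k \<notin> P" "Suc k \<notin> P"
    using assms by (simp_all add: P_def greedy_swaps_def del: greedy_at.simps)
  then have "w ! k = s ! k" using assms by (simp add: w_def nth_apply_swaps)
  moreover have "ham_dist w (x[k := c]) + of_bool (w ! k \<noteq> x ! k) = ham_dist w x + of_bool (w ! k \<noteq> c)"
    unfolding w_def by (rule ham_dist_update_right) (use k ls in simp_all)
  moreover have "ham_dist w x + 2 * card P = ham_dist s x"
    using ham_dist_apply_greedy_swaps[OF _ ls] by (simp add: w_def P_def)
  ultimately show ?thesis using cost_le by (auto simp: sh_cost_def P_def)
qed

subsection \<open>Exchanging a letter between lexicographically minimal optima\<close>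

lemma lex_less_update_nth:
  assumes "lex_less v (v[k := d])" and "k < length v"
  shows "v ! k < d"
proof -
  obtain i where i: "i < length v" "take i v = take i (v[k := d])" "v ! i < v[k := d] ! i"
    using assms(1) unfolding lex_less_def lexord_take_index_conv by auto
  then have "i = k" by (cases "i = k") auto
  then show ?thesis using i assms(2) by simp
qed

lemma lex_min_update_nth_less:
  assumes x: "is_lex_min (minimizers f A) x" and "x[k := d] \<in> A" and "f (x[k := d]) \<le> f x"
    and k: "k < length x" and "x ! k \<noteq> d"
  shows "x ! k < d"
proof -
  have "x[k := d] \<in> minimizers f A"
    using assms by (auto simp: is_lex_min_def minimizers_def intro: order_trans)
  moreover have "x[k := d] \<noteq> x" using \<open>x ! k \<noteq> d\<close> k by (metis nth_list_update_eq)
  ultimately show ?thesis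
    using x lex_less_update_nth[of x k d] k by (auto simp: is_lex_min_def)
qed

text \<open>In the application, a and b count the input strings whose k-th letter differs from x ! k and
  from y ! k, respectively.\<close>

lemma lex_min_exchange_nth_eq:
  fixes f g :: "'a::linorder list \<Rightarrow> nat" and a b :: nat
  assumes x: "is_lex_min (minimizers f A) x" and y: "is_lex_min (minimizers g A) y"
    and k: "k < length x" "k < length y"
    and A: "x[k := y ! k] \<in> A" "y[k := x ! k] \<in> A"
    and f: "f (x[k := y ! k]) + a \<le> f x + b" and g: "g (y[k := x ! k]) + b \<le> g y + a"
  shows "x ! k = y ! k"
proof (rule ccontr)
  assume ne: "x ! k \<noteq> y ! k"
  have "f x \<le> f (x[k := y ! k])" "g y \<le> g (y[k := x ! k])"
    using x y A by (auto simp: is_lex_min_def minimizers_def)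
  then have "f (x[k := y ! k]) \<le> f x" "g (y[k := x ! k]) \<le> g y" using f g by linarith+
  then have "x ! k < y ! k" "y ! k < x ! k"
    using lex_min_update_nth_less[OF x A(1) _ k(1)] lex_min_update_nth_less[OF y A(2) _ k(2)] ne
    by auto
  then show False by simp
qed

lemma strings_update: "x \<in> strings Sig n \<Longrightarrow> c \<in> Sig \<Longrightarrow> x[k := c] \<in> strings Sig n"
  unfolding strings_def using set_update_subset_insert[of x k c] by auto

lemma minimizers_enat:
  "(\<And>t. t \<in> A \<Longrightarrow> F t = enat (f t)) \<Longrightarrow> minimizers F A = minimizers f A"
  unfolding minimizers_def by auto

lemma minimizers_sum_sh_dist:
  assumes "\<forall>s\<in>set S. length s = n"
  shows "minimizers (\<lambda>t. \<Sum>j<length S. sh_dist (S ! j) t) (strings Sig n)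
           = minimizers (\<lambda>t. \<Sum>j<length S. sh_cost (S ! j) t) (strings Sig n)"
proof (rule minimizers_enat)
  fix t assume "t \<in> strings Sig n"
  then have "(\<Sum>j<length S. sh_dist (S ! j) t) = (\<Sum>j<length S. of_nat (sh_cost (S ! j) t))"
    using assms by (intro sum.cong refl) (simp add: strings_def sh_dist_eq_sh_cost of_nat_eq_enat)
  also have "\<dots> = of_nat (\<Sum>j<length S. sh_cost (S ! j) t)" by simp
  finally show "(\<Sum>j<length S. sh_dist (S ! j) t) = enat (\<Sum>j<length S. sh_cost (S ! j) t)"
    by (simp add: of_nat_eq_enat)
qed

lemma lex_min_centres_agree_ungreedy:
  assumes S: "\<forall>s\<in>set S. length s = n" and k: "k < n"
    and sH: "is_lex_min (minimizers (\<lambda>t. \<Sum>j<length S. ham_dist (S ! j) t) (strings Sig n)) sH"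
    and sSH: "is_lex_min (minimizers (\<lambda>t. \<Sum>j<length S. sh_cost (S ! j) t) (strings Sig n)) sSH"
    and ungreedy: "\<forall>j<length S. \<not> greedy_at sSH (S ! j) k \<and> \<not> greedy_at sSH (S ! j) (Suc k)"
  shows "sSH ! k = sH ! k"
proof (rule lex_min_exchange_nth_eq[OF sSH sH,
      where a = "\<Sum>j<length S. of_bool (S ! j ! k \<noteq> sSH ! k)"
        and b = "\<Sum>j<length S. of_bool (S ! j ! k \<noteq> sH ! k)"])
  have strings: "sH \<in> strings Sig n" "sSH \<in> strings Sig n"
    using sH sSH by (auto simp: is_lex_min_def minimizers_def)
  then have len_n: "length sSH = n" "length sH = n" by (simp_all add: strings_def)
  then show len: "k < length sSH" "k < length sH" using k by simp_all
  have "sH ! k \<in> Sig" "sSH ! k \<in> Sig" using strings len by (auto simp: strings_def)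
  then show "sSH[k := sH ! k] \<in> strings Sig n" "sH[k := sSH ! k] \<in> strings Sig n"
    using strings by (simp_all add: strings_update)
  show "(\<Sum>j<length S. sh_cost (S ! j) (sSH[k := sH ! k]))
          + (\<Sum>j<length S. of_bool (S ! j ! k \<noteq> sSH ! k))
        \<le> (\<Sum>j<length S. sh_cost (S ! j) sSH) + (\<Sum>j<length S. of_bool (S ! j ! k \<noteq> sH ! k))"
    unfolding sum.distrib[symmetric]
    using S len len_n ungreedy
    by (intro sum_mono sh_cost_update_ungreedy) (simp_all del: greedy_at.simps)
  show "(\<Sum>j<length S. ham_dist (S ! j) (sH[k := sSH ! k]))
          + (\<Sum>j<length S. of_bool (S ! j ! k \<noteq> sH ! k))
        \<le> (\<Sum>j<length S. ham_dist (S ! j) sH) + (\<Sum>j<length S. of_bool (S ! j ! k \<noteq> sSH ! k))"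
    unfolding sum.distrib[symmetric]
    using S len len_n by (intro sum_mono eq_imp_le ham_dist_update_right) simp_all
qed

lemma SW_empty_not_greedy_at:
  assumes "SW S t i = {}" and "j < length S"
  shows "\<not> greedy_at t (S ! j) i"
proof -
  have "Suc j \<notin> SW S t i" using assms(1) by simp
  then show ?thesis using assms(2) by (simp add: SW_def del: greedy_at.simps)
qed

theorem mainTheorem13:
  fixes Sig :: "'a::linorder set" and S :: "'a list list" and n :: nat
    and sH sSH :: "'a list"
  assumes "finite Sig" and "Sig \<noteq> {}"
    and "\<forall>s\<in>set S. s \<in> strings Sig n"
    and "is_lex_min (minimizers (\<lambda>t. \<Sum>j<length S. ham_dist (S ! j) t) (strings Sig n)) sH"
    and "is_lex_min (minimizers (\<lambda>t. \<Sum>j<length S. sh_dist (S ! j) t) (strings Sig n)) sSH"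
  shows "\<forall>i\<in>{1..n}. sSH ! (i - 1) \<noteq> sH ! (i - 1) \<longrightarrow>
           SW S sSH (i - 1) \<noteq> {} \<or> SW S sSH i \<noteq> {}"
proof (intro ballI impI; rule ccontr)
  fix i assume i: "i \<in> {1..n}" "sSH ! (i - 1) \<noteq> sH ! (i - 1)"
    and SW: "\<not> (SW S sSH (i - 1) \<noteq> {} \<or> SW S sSH i \<noteq> {})"
  obtain k where k: "i = Suc k" using i by (cases i) auto
  have S: "\<forall>s\<in>set S. length s = n" using assms(3) by (simp add: strings_def)
  have "sSH ! k = sH ! k"
  proof (rule lex_min_centres_agree_ungreedy[OF S _ assms(4)])
    show "is_lex_min (minimizers (\<lambda>t. \<Sum>j<length S. sh_cost (S ! j) t) (strings Sig n)) sSH"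
      using assms(5) minimizers_sum_sh_dist[OF S] by simp
    show "\<forall>j<length S. \<not> greedy_at sSH (S ! j) k \<and> \<not> greedy_at sSH (S ! j) (Suc k)"
      using SW k by (simp add: SW_empty_not_greedy_at del: greedy_at.simps)
  qed (use i k in simp)
  with i k show False by simp
qed

end
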